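(* Let $m\ge 9$ be odd and let $\Delta\ge 1$ be an integer. There exists an $m$-$\gamma_t$-critical graph $G$ of order $\Delta(G)+m$ with $\Delta(G)=\Delta$ and $\delta(G)\ge 2$ if and only if $\Delta\ge m-1$.
   Context: All graphs are finite and simple; $\Delta(G)$, $\delta(G)$ are maximum and minimum degree. A set $S\subseteq V(G)$ is a total dominating set if every vertex of $G$ is adjacent to some vertex of $S$; $\gamma_t(G)$ is the minimum size of such a set. A leaf is a vertex of degree one. A graph $G$ with no isolated vertex is $\gamma_t$-critical if for every vertex $v$ not adjacent to a leaf, $\gamma_t(G-v)<\gamma_t(G)$; it is $m$-$\gamma_t$-critical if moreover $\gamma_t(G)=m$. *)

theory Defs
  imports Main
begin

definition simple_graph :: "'a set \<Rightarrow> ('a \<Rightarrow> 'a \<Rightarrow> bool) \<Rightarrow> bool" where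
  "simple_graph V E \<longleftrightarrow> finite V \<and> (\<forall>x y. E x y \<longrightarrow> x \<in> V \<and> y \<in> V)
     \<and> (\<forall>x y. E x y \<longrightarrow> E y x) \<and> (\<forall>x. \<not> E x x)"

definition degree :: "'a set \<Rightarrow> ('a \<Rightarrow> 'a \<Rightarrow> bool) \<Rightarrow> 'a \<Rightarrow> nat" where
  "degree V E v = card {u \<in> V. E v u}"

definition max_degree :: "'a set \<Rightarrow> ('a \<Rightarrow> 'a \<Rightarrow> bool) \<Rightarrow> nat" where
  "max_degree V E = Max (degree V E ` V)"

definition min_degree :: "'a set \<Rightarrow> ('a \<Rightarrow> 'a \<Rightarrow> bool) \<Rightarrow> nat" where
  "min_degree V E = Min (degree V E ` V)"

definition is_leaf :: "'a set \<Rightarrow> ('a \<Rightarrow> 'a \<Rightarrow> bool) \<Rightarrow> 'a \<Rightarrow> bool" where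
  "is_leaf V E v \<longleftrightarrow> v \<in> V \<and> degree V E v = 1"

definition no_isolated :: "'a set \<Rightarrow> ('a \<Rightarrow> 'a \<Rightarrow> bool) \<Rightarrow> bool" where
  "no_isolated V E \<longleftrightarrow> (\<forall>v\<in>V. \<exists>u\<in>V. E v u)"

definition total_dominating :: "'a set \<Rightarrow> ('a \<Rightarrow> 'a \<Rightarrow> bool) \<Rightarrow> 'a set \<Rightarrow> bool" where
  "total_dominating V E S \<longleftrightarrow> S \<subseteq> V \<and> (\<forall>v\<in>V. \<exists>u\<in>S. E v u)"

definition gamma_t :: "'a set \<Rightarrow> ('a \<Rightarrow> 'a \<Rightarrow> bool) \<Rightarrow> nat" where
  "gamma_t V E = (LEAST k. \<exists>S. total_dominating V E S \<and> card S = k)"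

definition del_vertex :: "'a set \<Rightarrow> ('a \<Rightarrow> 'a \<Rightarrow> bool) \<Rightarrow> 'a \<Rightarrow> 'a set \<times> ('a \<Rightarrow> 'a \<Rightarrow> bool)" where
  "del_vertex V E v = (V - {v}, \<lambda>x y. E x y \<and> x \<noteq> v \<and> y \<noteq> v)"

definition gamma_t_critical :: "'a set \<Rightarrow> ('a \<Rightarrow> 'a \<Rightarrow> bool) \<Rightarrow> bool" where
  "gamma_t_critical V E \<longleftrightarrow> no_isolated V E \<and>
     (\<forall>v\<in>V. (\<not> (\<exists>u. E v u \<and> is_leaf V E u)) \<longrightarrow>
        gamma_t (fst (del_vertex V E v)) (snd (del_vertex V E v)) < gamma_t V E)"

definition m_gamma_t_critical :: "nat \<Rightarrow> 'a set \<Rightarrow> ('a \<Rightarrow> 'a \<Rightarrow> bool) \<Rightarrow> bool" where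
  "m_gamma_t_critical m V E \<longleftrightarrow> gamma_t_critical V E \<and> gamma_t V E = m"

end

theory Submission
  imports Defs "HOL-Library.Countable"
begin

(* Necessity.  Let v have maximum degree, A = N(v) and B = V - N[v], so |B| = m - 1.
   Replacing T by v, T and one neighbour of each B-vertex not dominated by T gives a total
   dominating set; hence every T meeting A dominates at most |T| vertices of B
   (covered_bound).  Criticality at v yields a total dominating set of G - v of size < m,
   which must lie inside B, so every a in A has a neighbour in B, and by the bound with
   T = {a} exactly one.  Choosing T = {a, b} and T = {a, w} shows that every b in B has a
   neighbour in A (far_has_near_nbr), and these neighbours are distinct, so |B| <= |A|.

   Sufficiency.  For m = 2K + 3 and Delta = 2K + 2t + [d] we build an explicit graph: a hub
   adjacent to Delta "inner" vertices and 2K + 2 "outer" vertices B_i, C_i with pairwise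
   disjoint neighbourhoods, which forces gamma_t >= 2K + 2; a small case analysis excludes
   equality.  Every vertex deletion is handled by exchanging a few outer vertices of the
   total dominating set for at most as many other vertices. *)

section \<open>Basic facts on total domination and degrees\<close>

lemma gamma_t_le:
  assumes "total_dominating V E S"
  shows "gamma_t V E \<le> card S"
  using assms unfolding gamma_t_def by (metis (mono_tags, lifting) Least_le)

lemma gamma_t_attained:
  assumes "total_dominating V E S"
  obtains S' where "total_dominating V E S'" "card S' = gamma_t V E"
proof -
  have "\<exists>k S. total_dominating V E S \<and> card S = k" using assms by blast
  from LeastI_ex[OF this] show ?thesis using that unfolding gamma_t_def by blast
qed

lemma two_neighbours:
  assumes "finite V" and "2 \<le> degree V E x"
  obtains u1 u2 where "E x u1" "E x u2" "u1 \<noteq> u2"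
proof -
  have "\<not> card {u\<in>V. E x u} \<le> Suc 0" using assms(2) unfolding degree_def by simp
  then show ?thesis using that card_le_Suc0_iff_eq[of "{u\<in>V. E x u}"] assms(1) by auto
qed

lemma min_degree_le:
  assumes "finite V" "x \<in> V"
  shows "min_degree V E \<le> degree V E x"
  using assms unfolding min_degree_def by simp

lemma max_degree_attained:
  assumes "finite V" "V \<noteq> {}"
  obtains v where "v \<in> V" "degree V E v = max_degree V E"
proof -
  have "Max (degree V E ` V) \<in> degree V E ` V" using assms by simp
  then show ?thesis using that unfolding max_degree_def by auto
qed

section \<open>Relabelling vertices along an injection\<close>

text \<open>The construction lives on a datatype of vertices, while the theorem speaks about graphs on
  \<open>nat\<close>; all notions of \<open>Defs\<close> are invariant under injective relabelling.\<close>

definition relabel :: "('a \<Rightarrow> 'b) \<Rightarrow> ('a \<Rightarrow> 'a \<Rightarrow> bool) \<Rightarrow> 'b \<Rightarrow> 'b \<Rightarrow> bool" where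
  "relabel f E x y \<longleftrightarrow> (\<exists>a b. x = f a \<and> y = f b \<and> E a b)"

context
  fixes f :: "'a \<Rightarrow> 'b" assumes inj: "inj f"
begin

lemma relabel_iff [simp]: "relabel f E (f a) (f b) = E a b"
  unfolding relabel_def using inj by (auto dest: injD)

lemma relabel_total_dominating:
  "total_dominating (f ` V) (relabel f E) (f ` S) \<longleftrightarrow> total_dominating V E S"
  unfolding total_dominating_def using inj by (auto simp: inj_image_subset_iff)

lemma relabel_gamma_t: "gamma_t (f ` V) (relabel f E) = gamma_t V E"
proof -
  have card_f: "card (f ` S) = card S" for S using inj by (simp add: card_image inj_on_subset)
  have "(\<exists>S'. total_dominating (f ` V) (relabel f E) S' \<and> card S' = k)
        \<longleftrightarrow> (\<exists>S. total_dominating V E S \<and> card S = k)" for k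
  proof
    assume "\<exists>S'. total_dominating (f ` V) (relabel f E) S' \<and> card S' = k"
    then obtain S' where S': "total_dominating (f ` V) (relabel f E) S'" "card S' = k" by blast
    then have "S' = f ` (f -` S')" unfolding total_dominating_def by auto
    then show "\<exists>S. total_dominating V E S \<and> card S = k"
      using S' relabel_total_dominating card_f by metis
  qed (use relabel_total_dominating card_f in blast)
  then show ?thesis unfolding gamma_t_def by simp
qed

lemma relabel_degree: "degree (f ` V) (relabel f E) (f a) = degree V E a"
proof -
  have "{u \<in> f ` V. relabel f E (f a) u} = f ` {u\<in>V. E a u}" by auto
  then show ?thesis unfolding degree_def using inj by (simp add: card_image inj_on_subset)
qed

lemma relabel_degrees: "degree (f ` V) (relabel f E) ` (f ` V) = degree V E ` V"
  using relabel_degree by (auto simp: image_iff)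

lemma relabel_simple_graph: "simple_graph V E \<Longrightarrow> simple_graph (f ` V) (relabel f E)"
  unfolding simple_graph_def relabel_def using inj by (auto dest: injD) blast

lemma relabel_del_vertex:
  "del_vertex (f ` V) (relabel f E) (f x)
     = (f ` fst (del_vertex V E x), relabel f (snd (del_vertex V E x)))"
  unfolding del_vertex_def using inj
  by (auto simp: relabel_def fun_eq_iff image_set_diff dest: injD)

lemma relabel_critical:
  assumes crit: "gamma_t_critical V E"
  shows "gamma_t_critical (f ` V) (relabel f E)"
  unfolding gamma_t_critical_def
proof (intro conjI ballI impI)
  show "no_isolated (f ` V) (relabel f E)"
    using crit unfolding gamma_t_critical_def no_isolated_def by auto
  have leaf: "is_leaf (f ` V) (relabel f E) (f u) = is_leaf V E u" for u
    unfolding is_leaf_def using relabel_degree inj by (auto simp: inj_image_mem_iff)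
  fix x' assume "x' \<in> f ` V"
    and no_leaf: "\<not> (\<exists>u. relabel f E x' u \<and> is_leaf (f ` V) (relabel f E) u)"
  then obtain x where x: "x \<in> V" "x' = f x" by auto
  have "\<not> (\<exists>u. E x u \<and> is_leaf V E u)" using no_leaf x leaf relabel_iff by metis
  then have "gamma_t (fst (del_vertex V E x)) (snd (del_vertex V E x)) < gamma_t V E"
    using crit x unfolding gamma_t_critical_def by blast
  then show "gamma_t (fst (del_vertex (f ` V) (relabel f E) x'))
               (snd (del_vertex (f ` V) (relabel f E) x')) < gamma_t (f ` V) (relabel f E)"
    using x by (simp add: relabel_del_vertex relabel_gamma_t)
qed

end

lemma nat_copy:
  fixes V :: "'a::countable set"
  assumes "simple_graph V E" "m_gamma_t_critical m V E"
  shows "\<exists>(V' :: nat set) E'. simple_graph V' E' \<and> m_gamma_t_critical m V' E'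
           \<and> card V' = card V \<and> max_degree V' E' = max_degree V E
           \<and> min_degree V' E' = min_degree V E"
proof (intro exI conjI)
  have inj: "inj (to_nat :: 'a \<Rightarrow> nat)" by simp
  show "simple_graph (to_nat ` V) (relabel to_nat E)"
    using relabel_simple_graph[OF inj] assms(1) .
  show "m_gamma_t_critical m (to_nat ` V) (relabel to_nat E)"
    using assms(2) relabel_critical[OF inj] relabel_gamma_t[OF inj]
    unfolding m_gamma_t_critical_def by metis
  show "card (to_nat ` V) = card V" using inj by (simp add: card_image inj_on_subset)
  show "max_degree (to_nat ` V) (relabel to_nat E) = max_degree V E"
    unfolding max_degree_def using relabel_degrees[OF inj] by metis
  show "min_degree (to_nat ` V) (relabel to_nat E) = min_degree V E"
    unfolding min_degree_def using relabel_degrees[OF inj] by metis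
qed

section \<open>Necessity: \<open>\<Delta>(G) \<ge> m - 1\<close>\<close>

locale critical_at_hub =
  fixes V :: "'a set" and E :: "'a \<Rightarrow> 'a \<Rightarrow> bool" and m :: nat and v :: 'a
  assumes graph: "simple_graph V E"
    and gamma: "gamma_t V E = m"
    and hub: "v \<in> V"
    and deg2: "\<And>x. x \<in> V \<Longrightarrow> 2 \<le> degree V E x"
    and card_far_set: "card {x\<in>V. x \<noteq> v \<and> \<not> E v x} = m - 1"
    and critical_hub: "gamma_t (V - {v}) (\<lambda>x y. E x y \<and> x \<noteq> v \<and> y \<noteq> v) < m"
    and m5: "5 \<le> m"
begin

definition near :: "'a set" where "near = {u\<in>V. E v u}"
definition far :: "'a set" where "far = {x\<in>V. x \<noteq> v \<and> \<not> E v x}"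
definition nbhd :: "'a \<Rightarrow> 'a set" where "nbhd x = {u. E x u}"
definition covered :: "'a set \<Rightarrow> 'a set" where "covered T = {q\<in>far. \<exists>t\<in>T. E q t}"

lemma finite_V: "finite V" and sym: "E x y \<Longrightarrow> E y x" and irrefl: "\<not> E x x"
  and edge_in: "E x y \<Longrightarrow> x \<in> V \<and> y \<in> V"
  using graph unfolding simple_graph_def by auto

lemma card_far: "card far = m - 1"
  using card_far_set unfolding far_def .

lemma finite_far: "finite far"
  using finite_V unfolding far_def by simp

lemma finite_covered: "finite (covered T)"
  using finite_far by (simp add: covered_def)

lemma card_nbhd: "x \<in> V \<Longrightarrow> 2 \<le> card (nbhd x)"
  using deg2 edge_in unfolding degree_def nbhd_def by (metis (no_types, lifting) Collect_cong)

lemma finite_nbhd: "finite (nbhd x)"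
  using finite_V edge_in by (auto simp: nbhd_def intro: finite_subset)

lemma two_nbrs: "x \<in> V \<Longrightarrow> \<exists>u1 u2. E x u1 \<and> E x u2 \<and> u1 \<noteq> u2"
  using two_neighbours[OF finite_V deg2] by metis

text \<open>The key counting bound: a set meeting \<open>near\<close> covers at most as many far vertices
  as it has elements, for otherwise \<open>v\<close>, \<open>T\<close> and one neighbour per uncovered far vertex would
  form a total dominating set with fewer than \<open>m\<close> elements.\<close>

lemma covered_bound:
  assumes T: "T \<subseteq> V" "finite T" "T \<inter> near \<noteq> {}"
  shows "card (covered T) \<le> card T"
proof -
  have "\<forall>x\<in>V. \<exists>u. E x u" using two_nbrs by blast
  then obtain nb where nb: "\<And>x. x \<in> V \<Longrightarrow> E x (nb x)" by metis
  define D where "D = insert v (T \<union> nb ` (far - covered T))"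
  have "total_dominating V E D"
    unfolding total_dominating_def
  proof (intro conjI ballI)
    show "D \<subseteq> V" using hub T nb edge_in unfolding D_def far_def by blast
    fix y assume y: "y \<in> V"
    consider "y = v" | "E v y" | "y \<in> covered T" | "y \<in> far - covered T"
      using y unfolding far_def by blast
    then show "\<exists>u\<in>D. E y u"
    proof cases
      case 1 then show ?thesis using T(3) unfolding D_def near_def by auto
    next
      case 2 then show ?thesis using sym unfolding D_def by auto
    next
      case 3 then show ?thesis unfolding covered_def D_def by auto
    qed (use nb y in \<open>auto simp: D_def\<close>)
  qed
  then have "m \<le> card D" using gamma_t_le gamma by metis
  also have "card D \<le> Suc (card (T \<union> nb ` (far - covered T)))"
    unfolding D_def using T(2) finite_far by (simp add: card_insert_if)
  also have "card (T \<union> nb ` (far - covered T)) \<le> card T + card (nb ` (far - covered T))"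
    by (rule card_Un_le)
  also have "card (nb ` (far - covered T)) \<le> card (far - covered T)"
    by (rule card_image_le) (simp add: finite_far)
  also have "card (far - covered T) = card far - card (covered T)"
    using finite_far by (simp add: card_Diff_subset covered_def)
  finally have "m \<le> Suc (card T + (card far - card (covered T)))" by simp
  moreover have "card (covered T) \<le> card far"
    using finite_far by (intro card_mono) (auto simp: covered_def)
  ultimately show ?thesis using card_far by linarith
qed


lemma deletion_tds:
  obtains S where "total_dominating (V - {v}) (\<lambda>x y. E x y \<and> x \<noteq> v \<and> y \<noteq> v) S" "card S < m"
proof -
  have "total_dominating (V - {v}) (\<lambda>x y. E x y \<and> x \<noteq> v \<and> y \<noteq> v) (V - {v})"
    unfolding total_dominating_def
  proof (intro conjI ballI subset_refl)
    fix y assume "y \<in> V - {v}"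
    then obtain u1 u2 where "E y u1" "E y u2" "u1 \<noteq> u2" "y \<noteq> v" using two_nbrs by blast
    then show "\<exists>u\<in>V - {v}. E y u \<and> y \<noteq> v \<and> u \<noteq> v" using edge_in by blast
  qed
  then obtain S where "total_dominating (V - {v}) (\<lambda>x y. E x y \<and> x \<noteq> v \<and> y \<noteq> v) S"
      "card S = gamma_t (V - {v}) (\<lambda>x y. E x y \<and> x \<noteq> v \<and> y \<noteq> v)"
    by (rule gamma_t_attained)
  then show ?thesis using critical_hub that by simp
qed

text \<open>Such a set avoids \<open>near\<close>: a near vertex in it would also dominate \<open>v\<close>.\<close>

lemma small_deletion_tds_in_far:
  assumes S: "total_dominating (V - {v}) (\<lambda>x y. E x y \<and> x \<noteq> v \<and> y \<noteq> v) S" and "card S < m"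
  shows "S \<subseteq> far"
proof
  fix s assume s: "s \<in> S"
  show "s \<in> far"
  proof (rule ccontr)
    assume "s \<notin> far"
    then have "E v s" using S s unfolding total_dominating_def far_def by auto
    then have "total_dominating V E S" using S s unfolding total_dominating_def by fastforce
    then show False using gamma_t_le gamma \<open>card S < m\<close> by fastforce
  qed
qed

lemma near_has_far_nbr:
  assumes "a \<in> near" shows "\<exists>b\<in>far. E a b"
proof -
  obtain S where S: "total_dominating (V - {v}) (\<lambda>x y. E x y \<and> x \<noteq> v \<and> y \<noteq> v) S" "card S < m"
    using deletion_tds .
  have "a \<in> V - {v}" using assms irrefl unfolding near_def by auto
  then obtain u where "u \<in> S" "E a u" using S(1) unfolding total_dominating_def by auto
  then show ?thesis using small_deletion_tds_in_far[OF S] by auto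
qed

lemma covered_pair:
  assumes "a \<in> near" "x \<in> V"
  shows "card (covered {a, x}) \<le> 2"
proof -
  have "card (covered {a, x}) \<le> card {a, x}"
    using assms by (intro covered_bound) (auto simp: near_def)
  also have "\<dots> \<le> 2" by (simp add: card_insert_if)
  finally show ?thesis .
qed

lemma near_unique_far_nbr:
  assumes "a \<in> near" "b \<in> far" "b' \<in> far" "E a b" "E a b'"
  shows "b = b'"
proof -
  have "card (covered {a}) \<le> card {a}"
    using assms(1) by (intro covered_bound) (auto simp: near_def)
  moreover have "{b, b'} \<subseteq> covered {a}" using assms sym unfolding covered_def by auto
  ultimately have "card {b, b'} \<le> 1"
    using card_mono[OF finite_covered \<open>{b, b'} \<subseteq> covered {a}\<close>] by simp
  then show ?thesis by (cases "b = b'") auto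
qed

lemma lonely_far_nbhd:
  assumes b: "b \<in> far" "\<not> (\<exists>a\<in>near. E b a)" and a: "a \<in> near"
  shows "nbhd b \<subseteq> far" and "card (nbhd b) \<le> 2" and "{q\<in>far. E a q} \<subseteq> nbhd b"
proof -
  show sub: "nbhd b \<subseteq> far"
    using b sym edge_in unfolding nbhd_def far_def near_def by blast
  have "nbhd b \<union> {q\<in>far. E a q} \<subseteq> covered {a, b}"
    using sub sym unfolding covered_def nbhd_def by auto
  then have "card (nbhd b \<union> {q\<in>far. E a q}) \<le> card (covered {a, b})"
    by (rule card_mono[OF finite_covered])
  also have "\<dots> \<le> 2" using covered_pair[OF a] b(1) by (simp add: far_def)
  finally have union_le2: "card (nbhd b \<union> {q\<in>far. E a q}) \<le> 2" .
  then show "card (nbhd b) \<le> 2"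
    using card_mono[of "nbhd b \<union> {q\<in>far. E a q}" "nbhd b"] finite_nbhd finite_far by auto
  have "2 \<le> card (nbhd b)" using card_nbhd b(1) by (simp add: far_def)
  with union_le2 have "nbhd b = nbhd b \<union> {q\<in>far. E a q}"
    using finite_nbhd finite_far by (intro card_seteq) auto
  then show "{q\<in>far. E a q} \<subseteq> nbhd b" by blast
qed

lemma far_nbr_of_near_sparse:
  assumes a: "a \<in> near" and w: "w \<in> far" "E a w"
  shows "card {x\<in>far. E w x} \<le> 1"
proof -
  have "insert w {x\<in>far. E w x} \<subseteq> covered {a, w}"
    using w sym unfolding covered_def by auto
  then have "card (insert w {x\<in>far. E w x}) \<le> card (covered {a, w})"
    by (rule card_mono[OF finite_covered])
  also have "\<dots> \<le> 2" using covered_pair[OF a] w(1) by (simp add: far_def)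
  finally show ?thesis using irrefl finite_far by simp
qed

lemma near_nonempty: "near \<noteq> {}"
proof -
  have "nbhd v \<noteq> {}" using card_nbhd[OF hub] by auto
  then show ?thesis using edge_in unfolding near_def nbhd_def by blast
qed

text \<open>Every far vertex has a near neighbour: otherwise, by the two previous lemmas, all far
  vertices would lie in the closed neighbourhood of one of them, i.e. \<open>m - 1 \<le> 3\<close>.\<close>

lemma far_has_near_nbr:
  assumes b0: "b0 \<in> far" shows "\<exists>a\<in>near. E b0 a"
proof (rule ccontr)
  assume lonely: "\<not> (\<exists>a\<in>near. E b0 a)"
  obtain a where a: "a \<in> near" using near_nonempty by blast
  obtain w where w: "w \<in> far" "E a w" using near_has_far_nbr[OF a] by blast
  have "far \<subseteq> insert b0 (nbhd b0)"
  proof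
    fix x assume x: "x \<in> far"
    show "x \<in> insert b0 (nbhd b0)"
    proof (cases "\<exists>a'\<in>near. E x a'")
      case True
      then obtain a' where "a' \<in> near" "E x a'" by blast
      then show ?thesis using lonely_far_nbhd(3)[OF b0 lonely] x sym by blast
    next
      case False
      have "w \<in> nbhd x" "w \<in> nbhd b0"
        using lonely_far_nbhd(3)[OF x False a] lonely_far_nbhd(3)[OF b0 lonely a] w by auto
      then have "{x, b0} \<subseteq> {y\<in>far. E w y}" using x b0 sym by (auto simp: nbhd_def)
      then have "card {x, b0} \<le> card {y\<in>far. E w y}" using finite_far by (intro card_mono) auto
      also have "\<dots> \<le> 1" by (rule far_nbr_of_near_sparse[OF a w])
      finally show ?thesis by (cases "x = b0") auto
    qed
  qed
  then have "card far \<le> card (insert b0 (nbhd b0))"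
    using finite_nbhd by (intro card_mono) auto
  also have "\<dots> \<le> 3"
    using lonely_far_nbhd(2)[OF b0 lonely a] finite_nbhd by (simp add: card_insert_if)
  finally show False using card_far m5 by simp
qed

text \<open>Picking a near neighbour for every far vertex is injective, whence \<open>|far| \<le> |near|\<close>.\<close>

theorem hub_degree_bound: "m - 1 \<le> degree V E v"
proof -
  obtain g where g: "\<And>b. b \<in> far \<Longrightarrow> g b \<in> near \<and> E b (g b)"
    using far_has_near_nbr by metis
  have "inj_on g far"
  proof (rule inj_onI)
    fix b b' assume "b \<in> far" "b' \<in> far" "g b = g b'"
    then show "b = b'"
      using near_unique_far_nbr[of "g b" b b'] g[of b] g[of b'] sym[of b "g b"] sym[of b' "g b'"]
      by auto
  qed
  then have "card far \<le> card near"
    using g finite_V by (intro card_inj_on_le) (auto simp: near_def)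
  then show ?thesis using card_far by (simp add: degree_def near_def)
qed

end

theorem max_degree_lower_bound:
  fixes V :: "'a set"
  assumes graph: "simple_graph V E" and crit: "m_gamma_t_critical m V E"
    and order: "card V = max_degree V E + m" and min2: "2 \<le> min_degree V E" and m5: "5 \<le> m"
  shows "m - 1 \<le> max_degree V E"
proof -
  have fin: "finite V" and irrefl: "\<And>x. \<not> E x x"
    using graph unfolding simple_graph_def by auto
  have "V \<noteq> {}" using order m5 by auto
  then obtain v where v: "v \<in> V" "degree V E v = max_degree V E"
    using max_degree_attained fin by blast
  have deg2: "2 \<le> degree V E x" if "x \<in> V" for x
    using min2 min_degree_le[OF fin that, of E] by simp
  have "{x\<in>V. x \<noteq> v \<and> \<not> E v x} = V - insert v {u\<in>V. E v u}" by auto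
  moreover have "card (insert v {u\<in>V. E v u}) = Suc (max_degree V E)"
    using fin irrefl v by (simp add: degree_def)
  ultimately have card_far: "card {x\<in>V. x \<noteq> v \<and> \<not> E v x} = m - 1"
    using fin v(1) order by (simp add: card_Diff_subset)
  have "\<not> (\<exists>u. E v u \<and> is_leaf V E u)"
    using deg2 unfolding is_leaf_def by fastforce
  then have "gamma_t (V - {v}) (\<lambda>x y. E x y \<and> x \<noteq> v \<and> y \<noteq> v) < m"
    using crit v(1) unfolding m_gamma_t_critical_def gamma_t_critical_def del_vertex_def by auto
  then interpret critical_at_hub V E m v
    using graph crit v(1) deg2 card_far m5 by unfold_locales (auto simp: m_gamma_t_critical_def)
  show ?thesis using hub_degree_bound v(2) by simp
qed

section \<open>Sufficiency: the construction\<close>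

text \<open>For \<open>K \<ge> 3\<close>, \<open>t \<ge> 1\<close> and a flag \<open>d\<close> (the parity of \<open>\<Delta>\<close>): a hub adjacent to
  \<open>Pv i, Qv i\<close> (\<open>i < K\<close>), \<open>Xv j, Yv j\<close> (\<open>j < t\<close>) and, if \<open>d\<close>, to \<open>Zv\<close>; the outer vertices
  \<open>Bv i, Cv i\<close> (\<open>i \<le> K\<close>) form a matching \<open>Bv i \<dash> Cv i\<close> with pendant paths
  \<open>Pv i \<dash> Bv i\<close>, \<open>Cv i \<dash> Qv i\<close> for \<open>i < K\<close>, while \<open>Bv K\<close> sees all \<open>Xv j\<close>, \<open>Cv K\<close> all \<open>Yv j\<close>,
  and \<open>Xv i \<dash> Yv j\<close> for \<open>i \<noteq> j\<close>.  If \<open>d\<close>, the vertex \<open>Zv\<close> is joined to \<open>Bv 0\<close> and all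
  \<open>Xv j, Yv j\<close>, and a gadget \<open>Qv 0 \<dash> Pv 1, Qv 0 \<dash> Qv 1, Pv 0 \<dash> Pv 2, Pv 0 \<dash> Qv 2\<close> is added.
  \<open>arc\<close> lists each edge in one direction.\<close>

datatype vertex = Hub | Zv | Bv nat | Cv nat | Pv nat | Qv nat | Xv nat | Yv nat

instance vertex :: countable by countable_datatype

fun present :: "nat \<Rightarrow> nat \<Rightarrow> bool \<Rightarrow> vertex \<Rightarrow> bool" where
  "present K t d Hub = True"
| "present K t d Zv = d"
| "present K t d (Bv i) = (i \<le> K)"
| "present K t d (Cv i) = (i \<le> K)"
| "present K t d (Pv i) = (i < K)"
| "present K t d (Qv i) = (i < K)"
| "present K t d (Xv i) = (i < t)"
| "present K t d (Yv i) = (i < t)"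

fun arc :: "nat \<Rightarrow> bool \<Rightarrow> vertex \<Rightarrow> vertex \<Rightarrow> bool" where
  "arc K d Hub y = (case y of Pv _ \<Rightarrow> True | Qv _ \<Rightarrow> True | Xv _ \<Rightarrow> True | Yv _ \<Rightarrow> True
                               | Zv \<Rightarrow> True | _ \<Rightarrow> False)"
| "arc K d (Bv i) y = (y = Cv i \<or> (i < K \<and> y = Pv i) \<or> (i = K \<and> (\<exists>j. y = Xv j))
                        \<or> (d \<and> i = 0 \<and> y = Zv))"
| "arc K d (Cv i) y = ((i < K \<and> y = Qv i) \<or> (i = K \<and> (\<exists>j. y = Yv j)))"
| "arc K d (Xv i) y = ((\<exists>j. j \<noteq> i \<and> y = Yv j) \<or> (d \<and> y = Zv))"
| "arc K d (Yv i) y = (d \<and> y = Zv)"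
| "arc K d (Qv i) y = (d \<and> i = 0 \<and> (y = Pv 1 \<or> y = Qv 1))"
| "arc K d (Pv i) y = (d \<and> i = 0 \<and> (y = Pv 2 \<or> y = Qv 2))"
| "arc K d Zv y = False"

definition verts :: "nat \<Rightarrow> nat \<Rightarrow> bool \<Rightarrow> vertex set" where
  "verts K t d = {x. present K t d x}"

definition adj :: "nat \<Rightarrow> nat \<Rightarrow> bool \<Rightarrow> vertex \<Rightarrow> vertex \<Rightarrow> bool" where
  "adj K t d x y \<longleftrightarrow> present K t d x \<and> present K t d y \<and> (arc K d x y \<or> arc K d y x)"

lemma adj_Hub: "adj K t d Hub y \<longleftrightarrow> (\<exists>i<K. y = Pv i) \<or> (\<exists>i<K. y = Qv i) \<or> (\<exists>j<t. y = Xv j)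
    \<or> (\<exists>j<t. y = Yv j) \<or> (d \<and> y = Zv)"
  by (cases y) (auto simp: adj_def)

lemma adj_Zv: "adj K t d Zv y \<longleftrightarrow> d \<and> (y = Hub \<or> y = Bv 0 \<or> (\<exists>j<t. y = Xv j) \<or> (\<exists>j<t. y = Yv j))"
  by (cases y) (auto simp: adj_def)

lemma adj_Bv: "3 \<le> K \<Longrightarrow> adj K t d (Bv i) y \<longleftrightarrow> i \<le> K \<and> (y = Cv i \<or> (i < K \<and> y = Pv i)
    \<or> (i = K \<and> (\<exists>j<t. y = Xv j)) \<or> (d \<and> i = 0 \<and> y = Zv))"
  by (cases y) (auto simp: adj_def)

lemma adj_Cv: "3 \<le> K \<Longrightarrow> adj K t d (Cv i) y \<longleftrightarrow> i \<le> K \<and> (y = Bv i \<or> (i < K \<and> y = Qv i)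
    \<or> (i = K \<and> (\<exists>j<t. y = Yv j)))"
  by (cases y) (auto simp: adj_def)

lemma adj_Pv: "3 \<le> K \<Longrightarrow> adj K t d (Pv i) y \<longleftrightarrow> i < K \<and> (y = Hub \<or> y = Bv i
    \<or> (d \<and> i = 0 \<and> (y = Pv 2 \<or> y = Qv 2)) \<or> (d \<and> i = 1 \<and> y = Qv 0) \<or> (d \<and> i = 2 \<and> y = Pv 0))"
  by (cases y) (auto simp: adj_def)

lemma adj_Qv: "3 \<le> K \<Longrightarrow> adj K t d (Qv i) y \<longleftrightarrow> i < K \<and> (y = Hub \<or> y = Cv i
    \<or> (d \<and> i = 0 \<and> (y = Pv 1 \<or> y = Qv 1)) \<or> (d \<and> i = 1 \<and> y = Qv 0) \<or> (d \<and> i = 2 \<and> y = Pv 0))"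
  by (cases y) (auto simp: adj_def)

lemma adj_Xv: "adj K t d (Xv i) y \<longleftrightarrow> i < t \<and> (y = Hub \<or> y = Bv K
    \<or> (\<exists>j<t. j \<noteq> i \<and> y = Yv j) \<or> (d \<and> y = Zv))"
  by (cases y) (auto simp: adj_def)

lemma adj_Yv: "adj K t d (Yv i) y \<longleftrightarrow> i < t \<and> (y = Hub \<or> y = Cv K
    \<or> (\<exists>j<t. j \<noteq> i \<and> y = Xv j) \<or> (d \<and> y = Zv))"
  by (cases y) (auto simp: adj_def)

text \<open>Two distinct neighbours of every vertex, and all neighbours except the \<open>Xv j\<close>,
  \<open>Yv j\<close>; they give the degree bounds.\<close>

fun other_nbrs :: "nat \<Rightarrow> vertex \<Rightarrow> vertex list" where
  "other_nbrs K Hub = []"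
| "other_nbrs K Zv = [Hub, Bv 0]"
| "other_nbrs K (Bv i) = [Cv i, Pv i, Zv]"
| "other_nbrs K (Cv i) = [Bv i, Qv i]"
| "other_nbrs K (Pv i) = [Hub, Bv i, Qv 0, Pv 0, Pv 2, Qv 2]"
| "other_nbrs K (Qv i) = [Hub, Cv i, Qv 0, Pv 1, Qv 1, Pv 0]"
| "other_nbrs K (Xv i) = [Hub, Bv K, Cv K, Zv]"
| "other_nbrs K (Yv i) = [Hub, Bv K, Cv K, Zv]"

fun partners :: "nat \<Rightarrow> vertex \<Rightarrow> vertex \<times> vertex" where
  "partners K Hub = (Pv 0, Qv 0)"
| "partners K Zv = (Hub, Bv 0)"
| "partners K (Bv i) = (Cv i, if i < K then Pv i else Xv 0)"
| "partners K (Cv i) = (Bv i, if i < K then Qv i else Yv 0)"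
| "partners K (Pv i) = (Hub, Bv i)"
| "partners K (Qv i) = (Hub, Cv i)"
| "partners K (Xv i) = (Hub, Bv K)"
| "partners K (Yv i) = (Hub, Cv K)"

locale construction =
  fixes K t :: nat and d :: bool
  assumes K3: "3 \<le> K" and t1: "1 \<le> t"
begin

abbreviation V :: "vertex set" where "V \<equiv> verts K t d"
abbreviation E :: "vertex \<Rightarrow> vertex \<Rightarrow> bool" where "E \<equiv> adj K t d"

lemmas adj_simps = adj_Hub adj_Zv adj_Bv[OF K3] adj_Cv[OF K3] adj_Pv[OF K3] adj_Qv[OF K3]
  adj_Xv adj_Yv

definition outer :: "vertex set" where "outer = Bv ` {..K} \<union> Cv ` {..K}"

definition inner :: "vertex set" where
  "inner = (if d then {Zv} else {}) \<union> Pv ` {..<K} \<union> Qv ` {..<K} \<union> Xv ` {..<t} \<union> Yv ` {..<t}"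

definition hub_degree :: nat where "hub_degree = 2*K + 2*t + (if d then 1 else 0)"

lemma V_eq: "V = insert Hub (inner \<union> outer)"
  unfolding verts_def inner_def outer_def
  by (rule set_eqI, case_tac x) auto

lemma finite_V: "finite V" unfolding V_eq inner_def outer_def by auto

lemma outer_sub: "outer \<subseteq> V" by (auto simp: outer_def verts_def)

lemma finite_outer: "finite outer" by (auto simp: outer_def)

lemma card_inner: "card inner = hub_degree"
  unfolding inner_def hub_degree_def
  by (subst card_Un_disjoint, simp, simp, force)+ (simp add: card_image inj_on_def)

lemma card_outer: "card outer = 2*K + 2"
  unfolding outer_def by (subst card_Un_disjoint) (auto simp: card_image inj_on_def)

lemma card_V: "card V = hub_degree + (2*K + 3)"
proof -
  have "inner \<inter> outer = {}" "Hub \<notin> inner \<union> outer" "finite inner"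
    unfolding inner_def outer_def by auto
  then have "card V = Suc (card inner + card outer)"
    unfolding V_eq using finite_outer by (simp add: card_Un_disjoint)
  then show ?thesis using card_inner card_outer by simp
qed

lemma simple: "simple_graph V E"
proof -
  have "\<not> E x x" for x by (cases x) (auto simp: adj_def)
  then show ?thesis unfolding simple_graph_def using finite_V by (auto simp: adj_def verts_def)
qed

lemma sym: "E x y \<Longrightarrow> E y x" by (auto simp: adj_def)

lemma hub_nbrs: "{y \<in> V. E Hub y} = inner"
  unfolding verts_def inner_def adj_Hub by (rule set_eqI, case_tac x) auto

lemma degree_hub: "degree V E Hub = hub_degree"
  unfolding degree_def hub_nbrs card_inner ..

text \<open>Apart from the \<open>Xv j\<close>, \<open>Yv j\<close>, a non-hub vertex has at most six neighbours, so no vertex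
  has larger degree than the hub.\<close>

lemma nbrs_sub_other_nbrs:
  "x \<noteq> Hub \<Longrightarrow> {y \<in> V. E x y} \<subseteq> set (other_nbrs K x) \<union> (Xv ` {..<t} \<union> Yv ` {..<t})"
  by (cases x) (auto simp: adj_simps)

lemma degree_le_hub:
  assumes "x \<noteq> Hub" shows "degree V E x \<le> hub_degree"
proof -
  have "degree V E x \<le> card (set (other_nbrs K x) \<union> (Xv ` {..<t} \<union> Yv ` {..<t}))"
    unfolding degree_def using nbrs_sub_other_nbrs[OF assms] by (intro card_mono) auto
  also have "\<dots> \<le> card (set (other_nbrs K x)) + card (Xv ` {..<t} \<union> Yv ` {..<t})"
    by (rule card_Un_le)
  also have "card (set (other_nbrs K x)) \<le> 6"
    using card_length[of "other_nbrs K x"] by (cases x) auto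
  also have "card (Xv ` {..<t} \<union> Yv ` {..<t}) \<le> t + t"
    by (metis card_Un_le card_image_le card_lessThan finite_lessThan add_mono order_trans)
  finally show ?thesis unfolding hub_degree_def using K3 by simp
qed

lemma partners_adj:
  assumes "x \<in> V"
  shows "E x (fst (partners K x))" "E x (snd (partners K x))" "fst (partners K x) \<noteq> snd (partners K x)"
  using assms K3 t1 by (cases x; auto simp: adj_simps verts_def)+

lemma degree_ge_2:
  assumes "x \<in> V" shows "2 \<le> degree V E x"
proof -
  have "{fst (partners K x), snd (partners K x)} \<subseteq> {u \<in> V. E x u}"
    using partners_adj[OF assms] by (auto simp: adj_def verts_def)
  then have "card {fst (partners K x), snd (partners K x)} \<le> degree V E x"
    unfolding degree_def using finite_V by (intro card_mono) auto
  then show ?thesis using partners_adj(3)[OF assms] by simp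
qed

lemma max_degree: "max_degree V E = hub_degree"
  unfolding max_degree_def
proof (rule Max_eqI)
  show "finite (degree V E ` V)" using finite_V by simp
  have "Hub \<in> V" by (simp add: verts_def)
  then show "hub_degree \<in> degree V E ` V" using degree_hub by (metis image_eqI)
  fix y assume "y \<in> degree V E ` V"
  then show "y \<le> hub_degree" using degree_le_hub degree_hub by (metis imageE order_refl)
qed

lemma min_degree: "2 \<le> min_degree V E"
  unfolding min_degree_def using finite_V degree_ge_2
  by (subst Min_ge_iff) (auto simp: verts_def intro: exI[of _ Hub])

text \<open>No vertex has two outer neighbours; hence the outer vertices need pairwise distinct
  dominators and \<open>gamma_t \<ge> 2K + 2\<close>.\<close>

lemma outer_nbrs_disjoint:
  assumes "w \<in> outer" "w' \<in> outer" "E w u" "E w' u"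
  shows "w = w'"
proof -
  have "E u w" "E u w'" using assms(3,4) sym by auto
  then show ?thesis using assms(1,2) by (cases u) (auto simp: adj_simps outer_def)
qed

text \<open>A hypothetical total dominating set \<open>S\<close> of size \<open>2K + 2\<close> would avoid the hub and give each
  outer vertex exactly one neighbour in \<open>S\<close>.  Chasing these constraints through the pendant
  pairs and the gadget shows that no neighbour of the hub lies in \<open>S\<close>, a contradiction.\<close>

context
  fixes S :: "vertex set"
  assumes S_sub: "S \<subseteq> V" and hub_notin: "Hub \<notin> S"
    and single_S_nbr: "\<And>w u u'. w \<in> outer \<Longrightarrow> u \<in> S \<Longrightarrow> u' \<in> S \<Longrightarrow> E w u \<Longrightarrow> E w u' \<Longrightarrow> u = u'"
    and dominating: "\<And>y. y \<in> V \<Longrightarrow> \<exists>u\<in>S. E y u"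
begin

text \<open>If \<open>Pv i\<close> (\<open>Qv i\<close>) is in \<open>S\<close>, then \<open>Cv i\<close> (\<open>Bv i\<close>) is not, so the partner \<open>Qv i\<close>
  (\<open>Pv i\<close>) must be dominated inside the gadget; likewise \<open>Xv j\<close>, \<open>Yv j\<close> force \<open>Zv\<close>.\<close>

lemma P_in_S:
  assumes i: "i < K" and P: "Pv i \<in> S"
  shows "d \<and> (i = 0 \<and> (Pv 1 \<in> S \<or> Qv 1 \<in> S) \<or> i = 1 \<and> Qv 0 \<in> S \<or> i = 2 \<and> Pv 0 \<in> S)"
proof -
  have "Cv i \<notin> S" using single_S_nbr[of "Bv i" "Pv i" "Cv i"] P i by (auto simp: outer_def adj_simps)
  moreover obtain u where "u \<in> S" "E (Qv i) u" using dominating[of "Qv i"] i by (auto simp: verts_def)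
  ultimately show ?thesis using hub_notin by (auto simp: adj_simps)
qed

lemma Q_in_S:
  assumes i: "i < K" and Q: "Qv i \<in> S"
  shows "d \<and> (i = 0 \<and> (Pv 2 \<in> S \<or> Qv 2 \<in> S) \<or> i = 1 \<and> Qv 0 \<in> S \<or> i = 2 \<and> Pv 0 \<in> S)"
proof -
  have "Bv i \<notin> S" using single_S_nbr[of "Cv i" "Qv i" "Bv i"] Q i by (auto simp: outer_def adj_simps)
  moreover obtain u where "u \<in> S" "E (Pv i) u" using dominating[of "Pv i"] i by (auto simp: verts_def)
  ultimately show ?thesis using hub_notin by (auto simp: adj_simps)
qed

lemma X_in_S:
  assumes j: "j < t" and X: "Xv j \<in> S"
  shows "Zv \<in> S"
proof -
  have "u \<notin> S" if "E (Bv K) u" "u \<noteq> Xv j" for u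
    using single_S_nbr[of "Bv K" "Xv j" u] X j that by (auto simp: outer_def adj_simps)
  moreover obtain u where "u \<in> S" "E (Yv j) u" using dominating[of "Yv j"] j by (auto simp: verts_def)
  ultimately show ?thesis using hub_notin j by (auto simp: adj_simps)
qed

lemma Y_in_S:
  assumes j: "j < t" and Y: "Yv j \<in> S"
  shows "Zv \<in> S"
proof -
  have "u \<notin> S" if "E (Cv K) u" "u \<noteq> Yv j" for u
    using single_S_nbr[of "Cv K" "Yv j" u] Y j that by (auto simp: outer_def adj_simps)
  moreover obtain u where "u \<in> S" "E (Xv j) u" using dominating[of "Xv j"] j by (auto simp: verts_def)
  ultimately show ?thesis using hub_notin j by (auto simp: adj_simps)
qed

text \<open>\<open>Zv\<close> in \<open>S\<close> would exclude \<open>Pv 0\<close> and \<open>Cv 0\<close> (like \<open>Zv\<close>, both are neighbours of \<open>Bv 0\<close>), and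
  dominating \<open>Qv 0\<close> and then \<open>Pv 0\<close> through the gadget would force \<open>Pv 0\<close> back into \<open>S\<close>.\<close>

lemma Z_notin_S: "Zv \<notin> S"
proof
  assume Z: "Zv \<in> S"
  then have d using S_sub by (auto simp: verts_def)
  have "Pv 0 \<notin> S" "Cv 0 \<notin> S"
    using single_S_nbr[of "Bv 0" Zv "Pv 0"] single_S_nbr[of "Bv 0" Zv "Cv 0"] Z \<open>d\<close> K3
    by (auto simp: outer_def adj_simps)
  obtain u where "u \<in> S" "E (Qv 0) u" using dominating[of "Qv 0"] K3 by (auto simp: verts_def)
  then have "Pv 1 \<in> S \<or> Qv 1 \<in> S" using \<open>Cv 0 \<notin> S\<close> hub_notin by (auto simp: adj_simps)
  then have "Qv 0 \<in> S" using P_in_S[of 1] Q_in_S[of 1] K3 by auto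
  then have "Pv 2 \<in> S \<or> Qv 2 \<in> S" using Q_in_S[of 0] K3 by auto
  then have "Pv 0 \<in> S" using P_in_S[of 2] Q_in_S[of 2] K3 by auto
  then show False using \<open>Pv 0 \<notin> S\<close> by simp
qed

text \<open>Hence no \<open>Xv j\<close>, \<open>Yv j\<close> is in \<open>S\<close>; if \<open>d\<close>, the vertex \<open>Zv\<close> is dominated by \<open>Bv 0\<close>, and no
  \<open>Pv i\<close>, \<open>Qv i\<close> is in \<open>S\<close> either, leaving the hub undominated.\<close>

lemma XY_notin_S: "j < t \<Longrightarrow> Xv j \<notin> S \<and> Yv j \<notin> S"
  using X_in_S Y_in_S Z_notin_S by blast

lemma B0_in_S: "d \<Longrightarrow> Bv 0 \<in> S"
proof -
  assume d
  then obtain u where "u \<in> S" "E Zv u" using dominating[of Zv] by (auto simp: verts_def)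
  then show "Bv 0 \<in> S" using XY_notin_S hub_notin by (auto simp: adj_simps)
qed

lemma PQ_notin_S:
  assumes i: "i < K" shows "Pv i \<notin> S \<and> Qv i \<notin> S"
proof -
  have Q0: "Qv 0 \<notin> S" if d
    using single_S_nbr[of "Cv 0" "Qv 0" "Bv 0"] B0_in_S[OF that] K3 by (auto simp: outer_def adj_simps)
  have P0: "Pv 0 \<notin> S" if d
    using P_in_S[of 0] P_in_S[of 1] Q_in_S[of 1] Q0[OF that] K3 by auto
  show ?thesis
    using P_in_S[OF i] Q_in_S[OF i] P_in_S[of 1] Q_in_S[of 1] P_in_S[of 2] Q_in_S[of 2] Q0 P0 K3
    by auto
qed

lemma no_perfect_tds: False
proof -
  obtain u where "u \<in> S" "E Hub u" using dominating[of Hub] by (auto simp: verts_def)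
  then show False using PQ_notin_S XY_notin_S Z_notin_S by (auto simp: adj_simps)
qed

end

lemma tds_lower_bound:
  assumes td: "total_dominating V E S" shows "2*K + 3 \<le> card S"
proof -
  have SV: "S \<subseteq> V" and dom: "\<And>y. y \<in> V \<Longrightarrow> \<exists>u\<in>S. E y u"
    using td unfolding total_dominating_def by auto
  have finS: "finite S" using SV finite_V finite_subset by blast
  obtain f where f: "\<And>w. w \<in> outer \<Longrightarrow> f w \<in> S \<and> E w (f w)"
    using dom outer_sub by (metis subsetD)
  have inj: "inj_on f outer"
    by (rule inj_onI) (use f outer_nbrs_disjoint in metis)
  have card_f: "card (f ` outer) = 2*K + 2" using card_image[OF inj] card_outer by simp
  have "\<not> S \<subseteq> f ` outer"
  proof
    assume sub: "S \<subseteq> f ` outer"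
    have "Hub \<notin> S"
    proof
      assume "Hub \<in> S"
      then obtain w where "w \<in> outer" "E w Hub" using sub f by fastforce
      then show False using sym by (auto simp: outer_def adj_simps)
    qed
    moreover have "u1 = u2" if h: "w \<in> outer" "u1 \<in> S" "u2 \<in> S" "E w u1" "E w u2" for w u1 u2
    proof -
      obtain w1 w2 where "w1 \<in> outer" "u1 = f w1" "w2 \<in> outer" "u2 = f w2" using sub h by blast
      then show ?thesis using outer_nbrs_disjoint f h by metis
    qed
    ultimately show False using no_perfect_tds SV dom by blast
  qed
  then obtain s where "s \<in> S" "s \<notin> f ` outer" by blast
  then have "insert s (f ` outer) \<subseteq> S" "card (insert s (f ` outer)) = 2*K + 3"
    using f card_f finite_outer by auto
  then show ?thesis using card_mono[OF finS] by metis
qed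

end

fun outer_nbr :: "nat \<Rightarrow> vertex \<Rightarrow> vertex" where
  "outer_nbr K Hub = Hub"
| "outer_nbr K Zv = Bv 0"
| "outer_nbr K (Bv i) = Cv i"
| "outer_nbr K (Cv i) = Bv i"
| "outer_nbr K (Pv i) = Bv i"
| "outer_nbr K (Qv i) = Cv i"
| "outer_nbr K (Xv i) = Bv K"
| "outer_nbr K (Yv i) = Cv K"

context construction
begin

lemma outer_nbr:
  assumes "y \<in> V" "y \<noteq> Hub" shows "outer_nbr K y \<in> outer" "E y (outer_nbr K y)"
  using assms by (cases y; auto simp: adj_simps outer_def verts_def)+

lemma tds_outer_P0: "total_dominating V E (insert (Pv 0) outer)"
  unfolding total_dominating_def
proof (intro conjI ballI)
  show "insert (Pv 0) outer \<subseteq> V" using outer_sub K3 by (auto simp: verts_def)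
  fix y assume "y \<in> V"
  then show "\<exists>u\<in>insert (Pv 0) outer. E y u"
    using outer_nbr K3 by (cases "y = Hub") (auto simp: adj_Hub)
qed

lemma gamma: "gamma_t V E = 2*K + 3"
  unfolding gamma_t_def
proof (rule Least_equality)
  have "Pv 0 \<notin> outer" by (auto simp: outer_def)
  then have "card (insert (Pv 0) outer) = 2*K + 3" using card_outer finite_outer by simp
  then show "\<exists>S. total_dominating V E S \<and> card S = 2*K + 3" using tds_outer_P0 by blast
qed (use tds_lower_bound in blast)

lemma critical_by_exchange:
  assumes F: "F \<subseteq> outer" and G: "finite G" "card G \<le> card F"
    and sub: "(outer - F) \<union> G \<subseteq> V - {x}"
    and dom: "\<And>y. y \<in> V \<Longrightarrow> y \<noteq> x \<Longrightarrow> \<exists>u\<in>(outer - F) \<union> G. E y u"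
  shows "gamma_t (fst (del_vertex V E x)) (snd (del_vertex V E x)) < gamma_t V E"
proof -
  have "total_dominating (V - {x}) (\<lambda>a b. E a b \<and> a \<noteq> x \<and> b \<noteq> x) ((outer - F) \<union> G)"
    unfolding total_dominating_def using sub dom by fastforce
  then have "gamma_t (V - {x}) (\<lambda>a b. E a b \<and> a \<noteq> x \<and> b \<noteq> x) \<le> card ((outer - F) \<union> G)"
    by (rule gamma_t_le)
  also have "\<dots> \<le> card (outer - F) + card G" by (rule card_Un_le)
  also have "\<dots> \<le> card outer"
    using F G finite_outer by (simp add: card_Diff_subset finite_subset card_mono)
  finally show ?thesis using gamma card_outer unfolding del_vertex_def by simp
qed

end

text \<open>\<open>exchange K d x = (F, G)\<close>: replacing the outer vertices \<open>F\<close> by the (not more numerous)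
  vertices \<open>G\<close> in the outer set yields a total dominating set of the graph with \<open>x\<close> deleted.\<close>

fun exchange :: "nat \<Rightarrow> bool \<Rightarrow> vertex \<Rightarrow> vertex set \<times> vertex set" where
  "exchange K d Hub = ({}, {})"
| "exchange K d Zv = ({Bv 0, Cv 0, Bv 1, Bv 2}, {Pv 0, Qv 0, Qv 1, Qv 2})"
| "exchange K d (Bv i) = ({Bv i, Cv i}, {Hub, if i < K then Qv i else Yv 0})"
| "exchange K d (Cv i) = ({Bv i, Cv i}, {Hub, if i < K then Pv i else Xv 0})"
| "exchange K d (Pv i) = (if d \<and> i = 0 then ({Bv 0, Cv 0, Bv 1, Bv K}, {Zv, Qv 0, Qv 1, Yv 0})
                       else ({Bv i}, {Qv i}))"
| "exchange K d (Qv i) = ({Cv i}, {Pv i})"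
| "exchange K d (Xv i) = ({Bv K}, {Yv i})"
| "exchange K d (Yv i) = ({Cv K}, {Xv i})"

context construction
begin

text \<open>Each exchange is admissible, avoids \<open>x\<close>, and dominates every other vertex: a vertex whose
  outer neighbour is kept is dominated by it, the remaining ones by the new vertices.\<close>

lemma exchange_sizes:
  assumes "x \<in> V"
  shows "fst (exchange K d x) \<subseteq> outer" "finite (snd (exchange K d x))"
    "card (snd (exchange K d x)) \<le> card (fst (exchange K d x))"
  using assms K3 by (cases x; auto simp: outer_def verts_def card_insert_if)+

lemma exchange_sub:
  assumes "x \<in> V"
  shows "(outer - fst (exchange K d x)) \<union> snd (exchange K d x) \<subseteq> V - {x}"
  using assms K3 t1 by (cases x) (auto simp: outer_def verts_def)

lemma exchange_dominates:
  assumes x: "x \<in> V" and y: "y \<in> V" "y \<noteq> x"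
  shows "\<exists>u\<in>(outer - fst (exchange K d x)) \<union> snd (exchange K d x). E y u"
proof (cases "y \<noteq> Hub \<and> outer_nbr K y \<notin> fst (exchange K d x)")
  case True then show ?thesis using outer_nbr[OF y(1)] by blast
next
  case False
  then have "\<exists>u\<in>snd (exchange K d x). E y u"
    using x y K3 t1 by (cases x; cases y) (auto simp: adj_simps verts_def split: if_splits)
  then show ?thesis by blast
qed

text \<open>So every deletion lowers \<open>gamma_t\<close>; no leaf condition is needed.\<close>

lemma critical: "gamma_t_critical V E"
  unfolding gamma_t_critical_def
proof (intro conjI ballI impI)
  show "no_isolated V E" unfolding no_isolated_def
    using partners_adj simple unfolding simple_graph_def by blast
  fix x assume "x \<in> V"
  then show "gamma_t (fst (del_vertex V E x)) (snd (del_vertex V E x)) < gamma_t V E"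
    using critical_by_exchange exchange_sizes exchange_sub exchange_dominates by metis
qed

theorem construction_properties:
  "simple_graph V E \<and> m_gamma_t_critical (2*K + 3) V E \<and> card V = max_degree V E + (2*K + 3)
    \<and> max_degree V E = hub_degree \<and> 2 \<le> min_degree V E"
  using simple critical gamma card_V max_degree min_degree unfolding m_gamma_t_critical_def by simp

end

lemma construction_parameters:
  fixes m \<Delta> :: nat
  assumes "odd m" "9 \<le> m" "m - 1 \<le> \<Delta>"
  obtains K t d where "3 \<le> K" "1 \<le> t" "m = 2*K + 3" "\<Delta> = 2*K + 2*t + (if d then 1 else 0)"
proof -
  define K where "K = (m - 3) div 2"
  define r where "r = \<Delta> div 2"
  have K: "m = 2*K + 3" using assms(1,2) unfolding K_def by (auto elim!: oddE)
  have r: "\<Delta> = 2*r + (if odd \<Delta> then 1 else 0)" unfolding r_def by presburger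
  have "3 \<le> K" "1 \<le> r - K" using K r assms(2,3) by (auto split: if_splits)
  moreover have "\<Delta> = 2*K + 2*(r - K) + (if odd \<Delta> then 1 else 0)" using K r assms(3) by auto
  ultimately show ?thesis using that K by blast
qed

theorem mainTheorem9:
  fixes m \<Delta> :: nat
  assumes "odd m" and "m \<ge> 9" and "\<Delta> \<ge> 1"
  shows "(\<exists>(V :: nat set) E. simple_graph V E \<and> m_gamma_t_critical m V E
            \<and> card V = max_degree V E + m \<and> max_degree V E = \<Delta>
            \<and> min_degree V E \<ge> 2)
         \<longleftrightarrow> \<Delta> \<ge> m - 1"
proof
  assume "\<exists>(V :: nat set) E. simple_graph V E \<and> m_gamma_t_critical m V E
            \<and> card V = max_degree V E + m \<and> max_degree V E = \<Delta> \<and> min_degree V E \<ge> 2"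
  then obtain V :: "nat set" and E where G: "simple_graph V E" "m_gamma_t_critical m V E"
      "card V = max_degree V E + m" "max_degree V E = \<Delta>" "min_degree V E \<ge> 2"
    by blast
  show "\<Delta> \<ge> m - 1" using max_degree_lower_bound[OF G(1,2,3,5)] G(4) \<open>m \<ge> 9\<close> by simp
next
  assume "\<Delta> \<ge> m - 1"
  then obtain K t d where par: "3 \<le> K" "1 \<le> t" "m = 2*K + 3"
      "\<Delta> = 2*K + 2*t + (if d then 1 else 0)"
    using construction_parameters assms(1,2) by blast
  then interpret construction K t d by unfold_locales
  have G: "simple_graph V E" "m_gamma_t_critical m V E" "card V = max_degree V E + m"
      "max_degree V E = \<Delta>" "2 \<le> min_degree V E"
    using construction_properties par(3,4) unfolding hub_degree_def by auto
  show "\<exists>(V :: nat set) E. simple_graph V E \<and> m_gamma_t_critical m V E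
          \<and> card V = max_degree V E + m \<and> max_degree V E = \<Delta> \<and> min_degree V E \<ge> 2"
  proof -
    obtain V' :: "nat set" and E' where G': "simple_graph V' E'" "m_gamma_t_critical m V' E'"
        "card V' = card V" "max_degree V' E' = max_degree V E" "min_degree V' E' = min_degree V E"
      using nat_copy[OF G(1,2)] by blast
    then show ?thesis using G(3,4,5) by (intro exI[of _ V'] exI[of _ E']) simp
  qed
qed

end
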